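(* Let $S$ be a $\mathcal{C}$-semigroup with $S\ne\mathcal{C}$ and genus $g$. Then $S$ is pseudo-symmetric if and only if $2g=1+\mathcal{F}(S)$ and $F(S)/2\in\mathbb{N}^p$.
   Context: An integer cone $\mathcal{C}\subseteq\mathbb{N}^p$ is the set of integer points of a finitely generated rational cone in $\mathbb{Q}_{\ge0}^p$. A $\mathcal{C}$-semigroup is a subset $S\subseteq\mathcal{C}$ containing $0$, closed under addition, with $\mathcal{C}\setminus S$ finite; $\mathcal{H}(S)=\mathcal{C}\setminus S$, $g=g(S)=\#\mathcal{H}(S)$. A monomial order $\preceq$ on $\mathbb{N}^p$ is fixed (total order, compatible with addition, $\mathbf 0\preceq\mathbf c$ for all $\mathbf c$), and $F(S)=\max_\preceq\mathcal{H}(S)$. $\mathrm{PF}(S)=\{\mathbf x\in\mathcal{H}(S)\mid \mathbf x+(S\setminus\{0\})\subseteq S\}$; $S$ is pseudo-symmetric if $\mathrm{PF}(S)=\{F(S),F(S)/2\}$. $\mathbf x\le_{\mathcal{C}}\mathbf y$ means $\mathbf y-\mathbf x\in\mathcal{C}$; $I_S(\mathbf n)=\{\mathbf s\in S\mid \mathbf s\le_{\mathcal{C}}\mathbf n\}$. The generalized Frobenius number is $\mathcal{F}(S)=\#I_S(F(S))+g(S)$. *)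

theory Defs
  imports "HOL-Analysis.Finite_Cartesian_Product"
begin

text \<open>Points of N^p are modelled as vectors of type nat^'n (p = CARD('n)).
  A rational point is of type rat^'n.\<close>

definition integer_cone :: "(nat ^ 'n) set \<Rightarrow> bool" where
  "integer_cone C \<longleftrightarrow>
     (\<exists>G :: (rat ^ 'n) set. finite G \<and> (\<forall>g\<in>G. \<forall>i. g $ i \<ge> 0) \<and>
        C = {x. \<exists>lam :: rat ^ 'n \<Rightarrow> rat. (\<forall>g\<in>G. lam g \<ge> 0) \<and>
                  (\<forall>i. of_nat (x $ i) = (\<Sum>g\<in>G. lam g * g $ i))})"

definition C_semigroup :: "(nat ^ 'n) set \<Rightarrow> (nat ^ 'n) set \<Rightarrow> bool" where
  "C_semigroup C S \<longleftrightarrow> integer_cone C \<and> S \<subseteq> C \<and> 0 \<in> S \<and>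
     (\<forall>a\<in>S. \<forall>b\<in>S. a + b \<in> S) \<and> finite (C - S)"

definition monomial_order :: "(nat ^ 'n \<Rightarrow> nat ^ 'n \<Rightarrow> bool) \<Rightarrow> bool" where
  "monomial_order le \<longleftrightarrow>
     (\<forall>x. le x x) \<and> (\<forall>x y z. le x y \<longrightarrow> le y z \<longrightarrow> le x z) \<and>
     (\<forall>x y. le x y \<longrightarrow> le y x \<longrightarrow> x = y) \<and> (\<forall>x y. le x y \<or> le y x) \<and>
     (\<forall>x y c. le x y \<longrightarrow> le (x + c) (y + c)) \<and> (\<forall>c. le 0 c)"

definition gaps :: "(nat ^ 'n) set \<Rightarrow> (nat ^ 'n) set \<Rightarrow> (nat ^ 'n) set" where
  "gaps C S = C - S"

definition genus :: "(nat ^ 'n) set \<Rightarrow> (nat ^ 'n) set \<Rightarrow> nat" where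
  "genus C S = card (gaps C S)"

definition frob :: "(nat ^ 'n \<Rightarrow> nat ^ 'n \<Rightarrow> bool) \<Rightarrow> (nat ^ 'n) set \<Rightarrow> (nat ^ 'n) set \<Rightarrow> nat ^ 'n" where
  "frob le C S = (THE x. x \<in> gaps C S \<and> (\<forall>y\<in>gaps C S. le y x))"

definition pseudo_frob :: "(nat ^ 'n) set \<Rightarrow> (nat ^ 'n) set \<Rightarrow> (nat ^ 'n) set" where
  "pseudo_frob C S = {x \<in> gaps C S. \<forall>s\<in>S - {0}. x + s \<in> S}"

definition pseudo_symmetric :: "(nat ^ 'n \<Rightarrow> nat ^ 'n \<Rightarrow> bool) \<Rightarrow> (nat ^ 'n) set \<Rightarrow> (nat ^ 'n) set \<Rightarrow> bool" where
  "pseudo_symmetric le C S \<longleftrightarrow>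
     (\<exists>h. h + h = frob le C S \<and> pseudo_frob C S = {frob le C S, h})"

definition cone_le :: "(nat ^ 'n) set \<Rightarrow> nat ^ 'n \<Rightarrow> nat ^ 'n \<Rightarrow> bool" where
  "cone_le C x y \<longleftrightarrow> (\<exists>c\<in>C. y = x + c)"

definition I_S :: "(nat ^ 'n) set \<Rightarrow> (nat ^ 'n) set \<Rightarrow> nat ^ 'n \<Rightarrow> (nat ^ 'n) set" where
  "I_S C S n = {s \<in> S. cone_le C s n}"

definition gen_frob :: "(nat ^ 'n \<Rightarrow> nat ^ 'n \<Rightarrow> bool) \<Rightarrow> (nat ^ 'n) set \<Rightarrow> (nat ^ 'n) set \<Rightarrow> nat" where
  "gen_frob le C S = card (I_S C S (frob le C S)) + genus C S"

end

theory Submission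
  imports Defs
begin

text \<open>For a gap n the map s \<mapsto> n - s sends I_S(n) injectively into the gaps, and if
  n = 2h the gap h lies outside its image; hence g \<ge> #I_S(n) + 1. For n = F(S), equality,
  i.e. 2g = 1 + #I_S(F) + g, says exactly that every gap is F - s with s \<in> I_S(F) or equals
  F/2. Every gap x has a translate x + s (s \<in> S) that is pseudo-Frobenius, and with this
  the covering of the gaps holds iff PF(S) = {F, F/2}.\<close>

lemma integer_cone_add:
  assumes "integer_cone C" "x \<in> C" "y \<in> C"
  shows "x + y \<in> C"
proof -
  obtain G :: "(rat ^ 'a) set" where C: "C = {x. \<exists>lam. (\<forall>g\<in>G. lam g \<ge> 0) \<and>
      (\<forall>i. of_nat (x $ i) = (\<Sum>g\<in>G. lam g * g $ i))}"
    using assms(1) unfolding integer_cone_def by blast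
  obtain l1 where l1: "\<forall>g\<in>G. l1 g \<ge> 0" "\<forall>i. of_nat (x $ i) = (\<Sum>g\<in>G. l1 g * g $ i)"
    using assms(2) C by blast
  obtain l2 where l2: "\<forall>g\<in>G. l2 g \<ge> 0" "\<forall>i. of_nat (y $ i) = (\<Sum>g\<in>G. l2 g * g $ i)"
    using assms(3) C by blast
  have "\<forall>i. of_nat ((x + y) $ i) = (\<Sum>g\<in>G. (l1 g + l2 g) * g $ i)"
    using l1 l2 by (simp add: distrib_right sum.distrib)
  with l1 l2 show ?thesis
    unfolding C by (intro CollectI exI[of _ "\<lambda>g. l1 g + l2 g"]) auto
qed

lemma integer_cone_half:
  assumes "integer_cone C" "h + h \<in> C"
  shows "h \<in> C"
proof -
  obtain G :: "(rat ^ 'a) set" where C: "C = {x. \<exists>lam. (\<forall>g\<in>G. lam g \<ge> 0) \<and>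
      (\<forall>i. of_nat (x $ i) = (\<Sum>g\<in>G. lam g * g $ i))}"
    using assms(1) unfolding integer_cone_def by blast
  obtain l where l: "\<forall>g\<in>G. l g \<ge> 0" "\<forall>i. of_nat ((h + h) $ i) = (\<Sum>g\<in>G. l g * g $ i)"
    using assms(2) C by blast
  have "\<forall>i. of_nat (h $ i) = (\<Sum>g\<in>G. (l g / 2) * g $ i)"
  proof
    fix i
    have "(\<Sum>g\<in>G. (l g / 2) * g $ i) = (\<Sum>g\<in>G. l g * g $ i) / 2"
      by (simp add: sum_divide_distrib)
    also have "\<dots> = of_nat (h $ i)" using l(2)[rule_format, of i] by simp
    finally show "of_nat (h $ i) = (\<Sum>g\<in>G. (l g / 2) * g $ i)" by simp
  qed
  with l show ?thesis
    unfolding C by (intro CollectI exI[of _ "\<lambda>g. l g / 2"]) auto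
qed

lemma C_semigroupD:
  assumes "C_semigroup C S"
  shows "integer_cone C" "S \<subseteq> C" "0 \<in> S" "a \<in> S \<Longrightarrow> b \<in> S \<Longrightarrow> a + b \<in> S"
    "finite (gaps C S)"
  using assms unfolding C_semigroup_def gaps_def by auto

lemma gaps_iff: "x \<in> gaps C S \<longleftrightarrow> x \<in> C \<and> x \<notin> S"
  by (simp add: gaps_def)

lemma gap_add_in_cone:
  assumes "C_semigroup C S" "x \<in> gaps C S" "s \<in> S"
  shows "x + s \<in> C"
proof (rule integer_cone_add[OF C_semigroupD(1)[OF assms(1)]])
  show "x \<in> C" using assms(2) by (simp add: gaps_iff)
  show "s \<in> C" using assms(3) C_semigroupD(2)[OF assms(1)] by blast
qed

lemma I_S_iff: "s \<in> I_S C S n \<longleftrightarrow> s \<in> S \<and> (\<exists>c\<in>C. n = s + c)"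
  by (simp add: I_S_def cone_le_def)

lemma monomial_orderD:
  assumes "monomial_order le"
  shows "le x x" "le x y \<Longrightarrow> le y z \<Longrightarrow> le x z" "le x y \<Longrightarrow> le y x \<Longrightarrow> x = y"
    "le x y \<or> le y x" "le x y \<Longrightarrow> le (x + c) (y + c)" "le 0 c"
  using assms unfolding monomial_order_def by blast+

lemma monomial_order_finite_greatest:
  assumes "monomial_order le" "finite A" "A \<noteq> {}"
  shows "\<exists>x\<in>A. \<forall>y\<in>A. le y x"
  using assms(2,3)
proof (induction A rule: finite_ne_induct)
  case (singleton x)
  then show ?case using monomial_orderD(1)[OF assms(1)] by blast
next
  case (insert a A)
  then obtain m where m: "m \<in> A" "\<forall>y\<in>A. le y m" by blast
  show ?case
  proof (cases "le m a")
    case True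
    then have "\<forall>y\<in>insert a A. le y a" using m monomial_orderD(1,2)[OF assms(1)] by blast
    then show ?thesis by blast
  next
    case False
    then have "le a m" using monomial_orderD(4)[OF assms(1)] by blast
    with m show ?thesis by blast
  qed
qed

lemma frob_greatest:
  assumes "monomial_order le" "C_semigroup C S" "S \<noteq> C"
  shows "frob le C S \<in> gaps C S" "y \<in> gaps C S \<Longrightarrow> le y (frob le C S)"
proof -
  have "gaps C S \<noteq> {}"
    using assms(3) C_semigroupD(2)[OF assms(2)] by (auto simp: gaps_iff)
  then obtain m where m: "m \<in> gaps C S" "\<forall>y\<in>gaps C S. le y m"
    using monomial_order_finite_greatest[OF assms(1) C_semigroupD(5)[OF assms(2)]] by blast
  have "\<And>x. x \<in> gaps C S \<and> (\<forall>y\<in>gaps C S. le y x) \<Longrightarrow> x = m"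
    using m monomial_orderD(3)[OF assms(1)] by blast
  with m have "frob le C S = m"
    unfolding frob_def by (intro the_equality) blast+
  with m show "frob le C S \<in> gaps C S" "y \<in> gaps C S \<Longrightarrow> le y (frob le C S)" by auto
qed

lemma frob_in_pseudo_frob:
  assumes "monomial_order le" "C_semigroup C S" "S \<noteq> C"
  shows "frob le C S \<in> pseudo_frob C S"
proof -
  let ?F = "frob le C S"
  have F: "?F \<in> gaps C S" by (rule frob_greatest[OF assms])
  have "?F + s \<in> S" if s: "s \<in> S" "s \<noteq> 0" for s
  proof (rule ccontr)
    assume "?F + s \<notin> S"
    with gap_add_in_cone[OF assms(2) F s(1)] have "?F + s \<in> gaps C S" by (simp add: gaps_iff)
    then have "le (?F + s) ?F" by (rule frob_greatest[OF assms])
    moreover have "le (0 + ?F) (s + ?F)"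
      by (rule monomial_orderD(5)[OF assms(1) monomial_orderD(6)[OF assms(1)]])
    then have "le ?F (?F + s)" by (simp add: add.commute)
    ultimately have "?F + s = ?F" by (rule monomial_orderD(3)[OF assms(1)])
    with s(2) show False by simp
  qed
  with F show ?thesis unfolding pseudo_frob_def by blast
qed

text \<open>Among the gaps of the form x + s with s \<in> S, one that is maximal for the
  componentwise order is pseudo-Frobenius.\<close>

lemma pseudo_frob_above_gap:
  assumes "C_semigroup C S" "x \<in> gaps C S"
  obtains f s where "f \<in> pseudo_frob C S" "s \<in> S" "f = x + s"
proof -
  define B where "B = {y \<in> gaps C S. \<exists>s\<in>S. y = x + s}"
  have "finite B" using C_semigroupD(5)[OF assms(1)] unfolding B_def by simp
  moreover have "x = x + 0" by simp
  then have "x \<in> B" using assms(2) C_semigroupD(3)[OF assms(1)] unfolding B_def by blast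
  ultimately obtain y where yB: "y \<in> B" and ymax: "\<forall>b\<in>B. y \<le> b \<longrightarrow> y = b"
    using finite_has_maximal[of B] by blast
  obtain s0 where s0: "y \<in> gaps C S" "s0 \<in> S" "y = x + s0" using yB unfolding B_def by blast
  have "y + s \<in> S" if s: "s \<in> S" "s \<noteq> 0" for s
  proof (rule ccontr)
    assume "y + s \<notin> S"
    with gap_add_in_cone[OF assms(1) s0(1) s(1)] have "y + s \<in> gaps C S" by (simp add: gaps_iff)
    moreover have "s0 + s \<in> S" using C_semigroupD(4)[OF assms(1) s0(2) s(1)] .
    moreover have "y + s = x + (s0 + s)" using s0(3) by (simp add: add.assoc)
    ultimately have "y + s \<in> B" unfolding B_def by blast
    moreover have "y \<le> y + s" by (simp add: less_eq_vec_def)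
    ultimately have "y = y + s" using ymax by blast
    with s(2) show False by simp
  qed
  then have "y \<in> pseudo_frob C S" using s0(1) unfolding pseudo_frob_def by blast
  with s0 that show ?thesis by blast
qed

lemma diff_I_S_in_gaps:
  assumes "C_semigroup C S" "n \<notin> S" "s \<in> I_S C S n"
  shows "n - s \<in> gaps C S" "s + (n - s) = n"
proof -
  obtain c where c: "s \<in> S" "c \<in> C" "n = s + c" using assms(3) I_S_iff by blast
  then have "c \<notin> S" using assms(2) C_semigroupD(4)[OF assms(1)] by blast
  with c show "n - s \<in> gaps C S" "s + (n - s) = n" by (simp_all add: gaps_iff)
qed

lemma inj_on_diff_I_S:
  assumes "C_semigroup C S" "n \<notin> S"
  shows "inj_on (\<lambda>s. n - s) (I_S C S n)"
proof (rule inj_onI)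
  fix s t assume "s \<in> I_S C S n" "t \<in> I_S C S n" "n - s = n - t"
  then have "s + (n - s) = t + (n - s)" using diff_I_S_in_gaps[OF assms] by metis
  then show "s = t" by simp
qed

lemma finite_I_S:
  assumes "C_semigroup C S" "n \<notin> S"
  shows "finite (I_S C S n)"
proof -
  have "(\<lambda>s. n - s) ` I_S C S n \<subseteq> gaps C S" using diff_I_S_in_gaps[OF assms] by blast
  then show ?thesis
    using finite_imageD[OF _ inj_on_diff_I_S[OF assms]] finite_subset C_semigroupD(5)[OF assms(1)]
    by blast
qed

lemma half_of_gap:
  assumes "C_semigroup C S" "n \<in> gaps C S" "h + h = n"
  shows "h \<in> gaps C S" "h \<notin> (\<lambda>s. n - s) ` I_S C S n"
proof -
  have nC: "n \<in> C" and nS: "n \<notin> S" using assms(2) by (simp_all add: gaps_iff)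
  have "h \<in> C"
    by (rule integer_cone_half[OF C_semigroupD(1)[OF assms(1)]]) (use nC assms(3) in simp)
  moreover have hS: "h \<notin> S" using C_semigroupD(4)[OF assms(1), of h h] nS assms(3) by auto
  ultimately show "h \<in> gaps C S" by (simp add: gaps_iff)
  show "h \<notin> (\<lambda>s. n - s) ` I_S C S n"
  proof
    assume "h \<in> (\<lambda>s. n - s) ` I_S C S n"
    then obtain s where s: "s \<in> I_S C S n" "h = n - s" by blast
    with nS have "s + h = n" using diff_I_S_in_gaps(2)[OF assms(1)] by simp
    then have "s + h = h + h" using assms(3) by simp
    then have "s = h" by simp
    with s(1) hS show False by (simp add: I_S_iff)
  qed
qed

lemma gaps_eq_iff_genus:
  assumes "C_semigroup C S" "n \<in> gaps C S" "h + h = n"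
  shows "gaps C S = (\<lambda>s. n - s) ` I_S C S n \<union> {h} \<longleftrightarrow> genus C S = card (I_S C S n) + 1"
proof -
  let ?A = "(\<lambda>s. n - s) ` I_S C S n \<union> {h}"
  have nS: "n \<notin> S" using assms(2) by (simp add: gaps_iff)
  have "?A \<subseteq> gaps C S" using diff_I_S_in_gaps(1)[OF assms(1) nS] half_of_gap(1)[OF assms] by blast
  then have "gaps C S = ?A \<longleftrightarrow> card (gaps C S) = card ?A"
    using card_subset_eq[OF C_semigroupD(5)[OF assms(1)]] by metis
  moreover have "card ?A = card ((\<lambda>s. n - s) ` I_S C S n) + 1"
    using half_of_gap(2)[OF assms] finite_I_S[OF assms(1) nS] by simp
  moreover have "card ((\<lambda>s. n - s) ` I_S C S n) = card (I_S C S n)"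
    by (rule card_image[OF inj_on_diff_I_S[OF assms(1) nS]])
  ultimately show ?thesis unfolding genus_def by simp
qed

lemma gaps_subset_if_pseudo_frob_eq:
  assumes "C_semigroup C S" "h + h = n" "pseudo_frob C S = {n, h}"
  shows "gaps C S \<subseteq> (\<lambda>s. n - s) ` I_S C S n \<union> {h}"
proof
  fix x assume x: "x \<in> gaps C S"
  then obtain f s where f: "f \<in> pseudo_frob C S" "s \<in> S" "f = x + s"
    by (rule pseudo_frob_above_gap[OF assms(1)])
  have xC: "x \<in> C" using x gaps_iff by blast
  consider "f = n" | "f = h" "s = 0" | "f = h" "s \<noteq> 0" using f(1) assms(3) by blast
  then show "x \<in> (\<lambda>s. n - s) ` I_S C S n \<union> {h}"
  proof cases
    case 1
    then have "s \<in> I_S C S n" "n - s = x" using f xC by (auto simp: I_S_iff add.commute)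
    then show ?thesis by blast
  next
    case 2
    with f show ?thesis by simp
  next
    case 3
    have "n = h + (x + s)" using 3 f(3) assms(2) by simp
    then have "n = (h + s) + x" by (metis add.assoc add.commute)
    moreover have "h + s \<in> S" using 3 f assms(3) unfolding pseudo_frob_def by blast
    ultimately have "h + s \<in> I_S C S n" "n - (h + s) = x" using xC by (auto simp: I_S_iff)
    then show ?thesis by blast
  qed
qed

lemma pseudo_frob_eq_if_gaps_eq:
  assumes "C_semigroup C S" "n \<in> pseudo_frob C S" "h + h = n"
    and gaps: "gaps C S = (\<lambda>s. n - s) ` I_S C S n \<union> {h}"
  shows "pseudo_frob C S = {n, h}"
proof -
  have nG: "n \<in> gaps C S" and nS: "n \<notin> S" using assms(2) unfolding pseudo_frob_def gaps_iff by auto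
  have hG: "h \<in> gaps C S" by (rule half_of_gap(1)[OF assms(1) nG assms(3)])
  have "x \<in> {n, h}" if x: "x \<in> pseudo_frob C S" for x
  proof (rule ccontr)
    assume "x \<notin> {n, h}"
    moreover have "x \<in> gaps C S" using x unfolding pseudo_frob_def by blast
    ultimately obtain t where t: "t \<in> I_S C S n" "x = n - t" using gaps by auto
    then have "x + t = n" using diff_I_S_in_gaps(2)[OF assms(1) nS] by (simp add: add.commute)
    moreover have "t \<noteq> 0" using \<open>x \<notin> {n, h}\<close> calculation by auto
    then have "x + t \<in> S" using x t(1) unfolding pseudo_frob_def I_S_iff by blast
    ultimately show False using nS by simp
  qed
  moreover have "h + s \<in> S" if s: "s \<in> S" "s \<noteq> 0" for s
  proof (rule ccontr)
    assume "h + s \<notin> S"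
    with gap_add_in_cone[OF assms(1) hG s(1)] have "h + s \<in> gaps C S" by (simp add: gaps_iff)
    moreover have "h + s \<noteq> h" using s(2) by simp
    ultimately obtain t where t: "t \<in> I_S C S n" "h + s = n - t" using gaps by auto
    then have "t + (h + s) = n" using diff_I_S_in_gaps(2)[OF assms(1) nS t(1)] by metis
    then have "(t + s) + h = h + h" using assms(3) by (metis add.assoc add.commute)
    then have "t + s = h" by simp
    moreover have "t + s \<in> S" using t s C_semigroupD(4)[OF assms(1)] by (simp add: I_S_iff)
    ultimately show False using hG gaps_iff by blast
  qed
  then have "h \<in> pseudo_frob C S" using hG unfolding pseudo_frob_def by blast
  ultimately show ?thesis using assms(2) by blast
qed

lemma pseudo_frob_eq_iff_gaps_eq:
  assumes "C_semigroup C S" "n \<in> pseudo_frob C S" "h + h = n"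
  shows "pseudo_frob C S = {n, h} \<longleftrightarrow> gaps C S = (\<lambda>s. n - s) ` I_S C S n \<union> {h}"
proof
  have nG: "n \<in> gaps C S" and nS: "n \<notin> S" using assms(2) unfolding pseudo_frob_def gaps_iff by auto
  assume "pseudo_frob C S = {n, h}"
  moreover have "(\<lambda>s. n - s) ` I_S C S n \<union> {h} \<subseteq> gaps C S"
    using diff_I_S_in_gaps(1)[OF assms(1) nS] half_of_gap(1)[OF assms(1) nG assms(3)] by blast
  ultimately show "gaps C S = (\<lambda>s. n - s) ` I_S C S n \<union> {h}"
    using gaps_subset_if_pseudo_frob_eq[OF assms(1,3)] by blast
qed (rule pseudo_frob_eq_if_gaps_eq[OF assms])

lemma ex_half_iff_even: "(\<exists>h. h + h = x) \<longleftrightarrow> (\<forall>i. even ((x :: nat ^ 'n) $ i))"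
proof
  assume "\<forall>i. even (x $ i)"
  then have "(\<chi> i. x $ i div 2) + (\<chi> i. x $ i div 2) = x"
    by (simp add: vec_eq_iff) (metis dvd_mult_div_cancel mult_2)
  then show "\<exists>h. h + h = x" by blast
qed auto

theorem mainTheorem7:
  fixes C S :: "(nat ^ 'n) set" and le :: "nat ^ 'n \<Rightarrow> nat ^ 'n \<Rightarrow> bool"
  assumes "monomial_order le" and "C_semigroup C S" and "S \<noteq> C"
  shows "pseudo_symmetric le C S \<longleftrightarrow>
           (2 * genus C S = 1 + gen_frob le C S \<and> (\<forall>i. even (frob le C S $ i)))"
proof -
  let ?F = "frob le C S"
  have F: "?F \<in> pseudo_frob C S" by (rule frob_in_pseudo_frob[OF assms])
  have FG: "?F \<in> gaps C S" by (rule frob_greatest(1)[OF assms])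
  have "pseudo_symmetric le C S \<longleftrightarrow>
      (\<exists>h. h + h = ?F \<and> gaps C S = (\<lambda>s. ?F - s) ` I_S C S ?F \<union> {h})"
    unfolding pseudo_symmetric_def using pseudo_frob_eq_iff_gaps_eq[OF assms(2) F] by blast
  also have "\<dots> \<longleftrightarrow> (\<exists>h. h + h = ?F) \<and> genus C S = card (I_S C S ?F) + 1"
    using gaps_eq_iff_genus[OF assms(2) FG] by blast
  also have "\<dots> \<longleftrightarrow> 2 * genus C S = 1 + gen_frob le C S \<and> (\<forall>i. even (?F $ i))"
    unfolding gen_frob_def ex_half_iff_even by auto
  finally show ?thesis .
qed

end
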